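(* Let $k$ be odd and let $G$ be a $k$-uniform $s$-cycle with $1\le s<\frac{k}{2}$. Then $\lambda(\mathcal{L})=\Delta=2$, where $\Delta$ is the maximum degree of $G$. If $s$ is even, then the only Laplacian H-eigenvalue $\lambda$ of $G$ with $\lambda>1$ is $2$.
   Context: A $k$-uniform $s$-cycle with $m$ edges has vertex set $\mathbb{Z}_n$, $n=m(k-s)$ (vertex $n+i$ identified with $i$), and edges $e_j=\{j(k-s)+1,\ldots,j(k-s)+k\}$, $j=0,\ldots,m-1$; it is assumed that $n\ge 2k-s$. The degree $d_i$ of a vertex is the number of edges containing it. A Laplacian H-eigenvalue of $G$ is a real $\lambda$ for which there exists $\mathbf{x}\in\mathbb{R}^n\setminus\{0\}$ with $\lambda x_i^{k-1}=d_ix_i^{k-1}-\sum_{e\ni i}\prod_{j\in e\setminus\{i\}}x_j$ for all $i$ (equivalently, an H-eigenvalue of the Laplacian tensor $\mathcal{L}=\mathcal{D}-\mathcal{A}$, with $\mathcal{A}$ the adjacency tensor having entries $1/(k-1)!$ on edges and $\mathcal{D}$ the diagonal degree tensor); $\lambda(\mathcal{L})$ is the largest Laplacian H-eigenvalue. *)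

theory Defs
  imports Complex_Main
begin

text \<open>A k-uniform s-cycle with m edges. Vertices are 0..<n, n = m(k-s), representing Z_n
(vertex n+i identified with i via mod n).\<close>

definition scyc_n :: "nat \<Rightarrow> nat \<Rightarrow> nat \<Rightarrow> nat" where
  "scyc_n k s m = m * (k - s)"

definition scyc_edge :: "nat \<Rightarrow> nat \<Rightarrow> nat \<Rightarrow> nat \<Rightarrow> nat set" where
  "scyc_edge k s m j = {(j * (k - s) + t) mod scyc_n k s m | t. 1 \<le> t \<and> t \<le> k}"

definition scyc_deg :: "nat \<Rightarrow> nat \<Rightarrow> nat \<Rightarrow> nat \<Rightarrow> nat" where
  "scyc_deg k s m i = card {j. j < m \<and> i \<in> scyc_edge k s m j}"

definition scyc_maxdeg :: "nat \<Rightarrow> nat \<Rightarrow> nat \<Rightarrow> nat" where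
  "scyc_maxdeg k s m = Max (scyc_deg k s m ` {0..<scyc_n k s m})"

definition scyc_lap_H_eig :: "nat \<Rightarrow> nat \<Rightarrow> nat \<Rightarrow> real \<Rightarrow> bool" where
  "scyc_lap_H_eig k s m lam \<longleftrightarrow>
     (\<exists>x :: nat \<Rightarrow> real.
        (\<exists>i < scyc_n k s m. x i \<noteq> 0) \<and>
        (\<forall>i < scyc_n k s m.
           lam * x i ^ (k - 1) =
             real (scyc_deg k s m i) * x i ^ (k - 1)
             - (\<Sum>j \<in> {j. j < m \<and> i \<in> scyc_edge k s m j}.
                  \<Prod>v \<in> scyc_edge k s m j - {i}. x v)))"

end

theory Submission imports Defs begin

(* Cut the n = m(k - s) vertices into m consecutive blocks of p = k - s vertices. Edge j is
  block j together with the first s vertices of block j + 1, so these s vertices have degree 2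
  and the other p - s have degree 1. The indicator vector of a degree-2 vertex is an eigenvector
  for 2, because every edge has at least three vertices.

  Conversely, let x be a nonzero solution of the eigen-equations for some lambda > 1 with
  lambda ~= 2. Multiplied by x_i they read lambda x_i^k = d_i x_i^k - (sum of P_e over the edges
  e containing i), P_e being the product of x over e. As k is odd, x is constant, say a_j, on the
  degree-1 vertices and, say b_j, on the degree-2 vertices of block j. With
  P_j = b_j^s a_j^(k-2s) b_(j+1)^s this leaves (lambda - 1) a_j^k = -P_j and
  (lambda - 2) b_j^k = -(P_j + P_(j-1)). Since k - 2s is odd, P_j ~= 0 forces
  (b_j b_(j+1))^s < 0. For even s this is impossible; for odd s it kills
  P_j (sgn b_j + sgn b_(j+1)), so for lambda > 2 the sum over j of sgn b_j times the second
  equation gives sum_j (lambda - 2) |b_j|^k = 0. Either way all P_j vanish, hence so do a and b. *)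

lemma odd_real_power_inject:
  assumes "odd n" and "(x::real) ^ n = y ^ n"
  shows "x = y"
  by (metis assms odd_real_root_power_cancel)

lemma odd_power_mult_sgn:
  assumes "odd n"
  shows "(y::real) ^ n * sgn y = \<bar>y\<bar> ^ n"
proof (cases "y < 0")
  case True
  then have "y ^ n = - (\<bar>y\<bar> ^ n)"
    using power_minus_odd[OF assms, of "\<bar>y\<bar>"] by simp
  with True show ?thesis by simp
qed (use assms in \<open>auto simp: odd_pos sgn_if\<close>)

lemma mod_eq_imp_eq_Icc:
  fixes a b n :: nat
  assumes "a \<in> {1..n}" "b \<in> {1..n}" "a mod n = b mod n"
  shows "a = b"
  using assms by (cases "a < n"; cases "b < n") auto

definition cyc_succ :: "nat \<Rightarrow> nat \<Rightarrow> nat" where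
  "cyc_succ m j = Suc j mod m"

definition cyc_pred :: "nat \<Rightarrow> nat \<Rightarrow> nat" where
  "cyc_pred m j = (j + m - 1) mod m"

lemma cyc_succ_less: "0 < m \<Longrightarrow> cyc_succ m j < m"
  by (simp add: cyc_succ_def)

lemma cyc_pred_less: "0 < m \<Longrightarrow> cyc_pred m j < m"
  by (simp add: cyc_pred_def)

lemma cyc_pred_succ: "j < m \<Longrightarrow> cyc_pred m (cyc_succ m j) = j"
  unfolding cyc_pred_def cyc_succ_def
  by (cases "Suc j = m") (auto simp: Suc_lessI)

lemma cyc_succ_pred: "j < m \<Longrightarrow> cyc_succ m (cyc_pred m j) = j"
  unfolding cyc_pred_def cyc_succ_def
  by (cases j) (auto simp: mod_Suc)

lemma cyc_succ_eq_iff: "j < m \<Longrightarrow> q < m \<Longrightarrow> cyc_succ m j = q \<longleftrightarrow> j = cyc_pred m q"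
  by (auto simp: cyc_pred_succ cyc_succ_pred)

lemma cyc_succ_neq: "2 \<le> m \<Longrightarrow> j < m \<Longrightarrow> cyc_succ m j \<noteq> j"
  by (auto simp: cyc_succ_def mod_Suc)

lemma cyc_pred_neq: "2 \<le> m \<Longrightarrow> j < m \<Longrightarrow> cyc_pred m j \<noteq> j"
  by (metis cyc_succ_neq cyc_succ_pred)

lemma bij_betw_cyc_succ: "bij_betw (cyc_succ m) {..<m} {..<m}"
  by (rule bij_betw_byWitness[where f' = "cyc_pred m"])
    (auto simp: cyc_succ_less cyc_pred_less cyc_pred_succ cyc_succ_pred)

lemma sum_cyc_pred_reindex:
  "(\<Sum>j<m. f (cyc_pred m j) j) = (\<Sum>j<m. f j (cyc_succ m j))"
proof -
  have "(\<Sum>j<m. f (cyc_pred m j) j)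
        = (\<Sum>j<m. f (cyc_pred m (cyc_succ m j)) (cyc_succ m j))"
    by (rule sum.reindex_bij_betw[OF bij_betw_cyc_succ, symmetric])
  also have "\<dots> = (\<Sum>j<m. f j (cyc_succ m j))"
    by (simp add: cyc_pred_succ)
  finally show ?thesis .
qed

lemma cyclic_sgn_sum_eq_0:
  fixes P b :: "nat \<Rightarrow> real"
  assumes "\<And>j. j < m \<Longrightarrow> P j \<noteq> 0 \<Longrightarrow> b j * b (cyc_succ m j) < 0"
  shows "(\<Sum>j<m. sgn (b j) * (P j + P (cyc_pred m j))) = 0"
proof -
  have sign_change: "P j * (sgn (b j) + sgn (b (cyc_succ m j))) = 0" if "j < m" for j
    using assms[OF that] by (cases "P j = 0") (auto simp: mult_less_0_iff)
  have "(\<Sum>j<m. sgn (b j) * (P j + P (cyc_pred m j)))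
        = (\<Sum>j<m. sgn (b j) * P j) + (\<Sum>j<m. sgn (b j) * P (cyc_pred m j))"
    by (simp add: distrib_left sum.distrib)
  also have "(\<Sum>j<m. sgn (b j) * P (cyc_pred m j)) = (\<Sum>j<m. sgn (b (cyc_succ m j)) * P j)"
    by (rule sum_cyc_pred_reindex[of "\<lambda>i j. sgn (b j) * P i"])
  also have "(\<Sum>j<m. sgn (b j) * P j) + \<dots> = (\<Sum>j<m. P j * (sgn (b j) + sgn (b (cyc_succ m j))))"
    by (simp add: algebra_simps sum.distrib)
  also have "\<dots> = 0"
    by (rule sum.neutral) (simp add: sign_change)
  finally show ?thesis .
qed

lemma power_balance_neg:
  fixes a b c lam :: real
  assumes "odd r" and "1 < lam"
    and "(lam - 1) * a ^ (r + 2 * s) = - (b ^ s * a ^ r * c ^ s)"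
    and "b ^ s * a ^ r * c ^ s \<noteq> 0"
  shows "(b * c) ^ s < 0"
proof -
  have "a \<noteq> 0"
    using assms(4) \<open>odd r\<close> by auto
  have "a ^ r * ((lam - 1) * a ^ (2 * s) + (b * c) ^ s) = 0"
    using assms(3) by (simp add: power_add power_mult_distrib algebra_simps)
  with \<open>a \<noteq> 0\<close> have "(b * c) ^ s = - ((lam - 1) * a ^ (2 * s))"
    by simp
  moreover have "0 < (lam - 1) * a ^ (2 * s)"
    using \<open>a \<noteq> 0\<close> \<open>1 < lam\<close> by (simp add: power_mult)
  ultimately show ?thesis by simp
qed

lemma cyclic_overlap_vanish:
  fixes b P :: "nat \<Rightarrow> real"
  assumes "odd k" and "2 < lam"
    and b_eq: "\<And>j. j < m \<Longrightarrow> (lam - 2) * b j ^ k = - (P j + P (cyc_pred m j))"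
    and "\<And>j. j < m \<Longrightarrow> P j \<noteq> 0 \<Longrightarrow> b j * b (cyc_succ m j) < 0"
    and "i < m"
  shows "b i = 0"
proof -
  have "(lam - 2) * \<bar>b j\<bar> ^ k = - (sgn (b j) * (P j + P (cyc_pred m j)))" if "j < m" for j
  proof -
    have "(lam - 2) * \<bar>b j\<bar> ^ k = ((lam - 2) * b j ^ k) * sgn (b j)"
      by (simp add: odd_power_mult_sgn[OF \<open>odd k\<close>, symmetric])
    also have "\<dots> = - (sgn (b j) * (P j + P (cyc_pred m j)))"
      by (simp only: b_eq[OF that]) (simp add: algebra_simps)
    finally show ?thesis .
  qed
  then have "(\<Sum>j<m. (lam - 2) * \<bar>b j\<bar> ^ k) = - (\<Sum>j<m. sgn (b j) * (P j + P (cyc_pred m j)))"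
    by (simp add: sum_negf)
  also have "\<dots> = 0"
    using cyclic_sgn_sum_eq_0[of m P b] assms(4) by simp
  finally have "\<forall>j\<in>{..<m}. (lam - 2) * \<bar>b j\<bar> ^ k = 0"
    using \<open>2 < lam\<close> by (subst (asm) sum_nonneg_eq_0_iff) auto
  then show ?thesis
    using \<open>i < m\<close> \<open>2 < lam\<close> odd_pos[OF \<open>odd k\<close>] by auto
qed

lemma cyclic_system_trivial:
  fixes a b P :: "nat \<Rightarrow> real" and lam :: real
  assumes "odd r" and k_eq: "k = r + 2 * s"
    and P_eq: "\<And>j. j < m \<Longrightarrow> P j = b j ^ s * a j ^ r * b (cyc_succ m j) ^ s"
    and a_eq: "\<And>j. j < m \<Longrightarrow> (lam - 1) * a j ^ k = - P j"
    and b_eq: "\<And>j. j < m \<Longrightarrow> (lam - 2) * b j ^ k = - (P j + P (cyc_pred m j))"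
    and "1 < lam" "lam \<noteq> 2" "even s \<or> 2 < lam" and "j < m"
  shows "a j = 0 \<and> b j = 0"
proof -
  have "0 < k"
    using k_eq odd_pos[OF \<open>odd r\<close>] by simp
  have neg: "(b i * b (cyc_succ m i)) ^ s < 0" if "i < m" "P i \<noteq> 0" for i
    using power_balance_neg[OF \<open>odd r\<close> \<open>1 < lam\<close>] a_eq[OF that(1)] P_eq[OF that(1)] that(2) k_eq
    by simp
  have P_zero: "P i = 0" if "i < m" for i
  proof (cases "even s")
    case True
    then show ?thesis
      using neg[OF that] zero_le_even_power[of s] by fastforce
  next
    case False
    with assms have "2 < lam" by simp
    have "b i * b (cyc_succ m i) < 0" if "i < m" "P i \<noteq> 0" for i
      using neg[OF that] by (metis not_le zero_le_power)
    then have "b i = 0" if "i < m" for i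
      using cyclic_overlap_vanish[of k lam m b P] that \<open>2 < lam\<close> b_eq k_eq \<open>odd r\<close> by simp
    then show ?thesis
      using P_eq[OF that] False that by (simp add: odd_pos)
  qed
  have "(lam - 1) * a j ^ k = 0"
    using a_eq[OF \<open>j < m\<close>] P_zero[OF \<open>j < m\<close>] by simp
  moreover have "(lam - 2) * b j ^ k = 0"
    using b_eq[OF \<open>j < m\<close>] P_zero[OF \<open>j < m\<close>] P_zero[OF cyc_pred_less] \<open>j < m\<close> by simp
  ultimately show ?thesis
    using \<open>1 < lam\<close> \<open>lam \<noteq> 2\<close> \<open>0 < k\<close> by simp
qed

locale s_cycle =
  fixes k s m p n :: nat
  assumes odd_k: "odd k" and s_pos: "1 \<le> s" and s_less: "2 * s < k" and m_ge_2: "2 \<le> m"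
    and k_eq: "k = p + s" and n_eq: "n = m * p"
begin

abbreviation edge :: "nat \<Rightarrow> nat set" where
  "edge j \<equiv> scyc_edge k s m j"

definition vert :: "nat \<Rightarrow> nat \<Rightarrow> nat" where
  "vert q t = (q * p + t) mod n"

lemma scyc_n_eq: "scyc_n k s m = n"
  using k_eq n_eq by (simp add: scyc_n_def)

lemma s_less_p: "s < p"
  using s_less k_eq by simp

lemma m_pos: "0 < m"
  using m_ge_2 by simp

lemma n_pos: "0 < n"
  using s_less_p m_pos n_eq by simp

lemma vert_less: "vert q t < n"
  using n_pos by (simp add: vert_def)

lemma vert_inject:
  assumes "q < m" "q' < m" "t \<in> {1..p}" "t' \<in> {1..p}" and "vert q t = vert q' t'"
  shows "q = q' \<and> t = t'"
proof -
  have bound: "i * p + u \<le> n" if "i < m" "u \<le> p" for i u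
  proof -
    have "i * p + u \<le> Suc i * p" using that by simp
    also have "\<dots> \<le> n"
      using mult_le_mono1[OF Suc_leI[OF that(1)], of p] n_eq by simp
    finally show ?thesis .
  qed
  have "q * p + t = q' * p + t'"
    using mod_eq_imp_eq_Icc[of "q * p + t" n "q' * p + t'"] assms bound[of q t] bound[of q' t']
    unfolding vert_def by simp
  moreover obtain r r' where "t = Suc r" "t' = Suc r'" "r < p" "r' < p"
    using assms(3,4) by (intro that[of "t - 1" "t' - 1"]) auto
  ultimately have "(q * p + r) div p = (q' * p + r') div p"
    by simp
  then have "q = q'"
    using \<open>r < p\<close> \<open>r' < p\<close> by simp
  then show ?thesis
    using \<open>q * p + t = q' * p + t'\<close> by simp
qed

lemma inj_on_vert: "q < m \<Longrightarrow> inj_on (vert q) {1..p}"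
  unfolding inj_on_def using vert_inject[of q q] by blast

lemma vert_cases:
  assumes "v < n"
  obtains q t where "q < m" "t \<in> {1..p}" "v = vert q t"
proof (cases "v = 0")
  case True
  have "(m - 1) * p + p = n"
    using m_pos n_eq by (metis Suc_pred' add.commute mult_Suc)
  then have "v = vert (m - 1) p"
    using True by (simp add: vert_def)
  then show ?thesis
    using m_pos s_less_p by (intro that[of "m - 1" p]) auto
next
  case False
  define q where "q = (v - 1) div p"
  define t where "t = (v - 1) mod p + 1"
  have v_eq: "v = q * p + t"
    using False unfolding q_def t_def by simp
  have "t \<in> {1..p}"
    using s_less_p unfolding t_def by (simp add: Suc_le_eq)
  moreover have "q < m"
  proof (rule ccontr)
    assume "\<not> q < m"
    then have "n \<le> q * p" using n_eq by simp
    with v_eq \<open>v < n\<close> show False by linarith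
  qed
  moreover have "v = vert q t"
    using v_eq \<open>v < n\<close> by (simp add: vert_def)
  ultimately show ?thesis using that by blast
qed

lemma vert_cyc_succ: "vert (cyc_succ m j) t = (j * p + (p + t)) mod n"
proof -
  have "cyc_succ m j * p = (Suc j * p) mod n"
    unfolding cyc_succ_def n_eq by (rule mod_mult_mult2[symmetric])
  then have "vert (cyc_succ m j) t = ((Suc j * p) mod n + t) mod n"
    by (simp add: vert_def)
  also have "\<dots> = (Suc j * p + t) mod n"
    by (rule mod_add_left_eq)
  finally show ?thesis
    by (simp add: algebra_simps)
qed

lemma edge_eq: "edge j = vert j ` {1..p} \<union> vert (cyc_succ m j) ` {1..s}"
proof
  show "edge j \<subseteq> vert j ` {1..p} \<union> vert (cyc_succ m j) ` {1..s}"
  proof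
    fix v assume "v \<in> edge j"
    then obtain t where t: "1 \<le> t" "t \<le> k" "v = (j * p + t) mod n"
      using k_eq unfolding scyc_edge_def scyc_n_eq by auto
    show "v \<in> vert j ` {1..p} \<union> vert (cyc_succ m j) ` {1..s}"
    proof (cases "t \<le> p")
      case True
      with t show ?thesis by (auto simp: vert_def)
    next
      case False
      then have "v = vert (cyc_succ m j) (t - p)"
        using t by (simp add: vert_cyc_succ)
      moreover have "t - p \<in> {1..s}"
        using False t k_eq by auto
      ultimately show ?thesis by blast
    qed
  qed
next
  have "vert j t \<in> edge j" if "t \<in> {1..p}" for t
    using that k_eq unfolding scyc_edge_def vert_def scyc_n_eq by auto
  moreover have "vert (cyc_succ m j) t \<in> edge j" if "t \<in> {1..s}" for t
  proof -
    have "vert (cyc_succ m j) t = (j * p + (p + t)) mod n" by (rule vert_cyc_succ)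
    moreover have "1 \<le> p + t" "p + t \<le> k" using that k_eq by auto
    ultimately show ?thesis
      using k_eq unfolding scyc_edge_def scyc_n_eq by auto
  qed
  ultimately show "vert j ` {1..p} \<union> vert (cyc_succ m j) ` {1..s} \<subseteq> edge j"
    by blast
qed

lemma finite_edge: "finite (edge j)"
  by (simp add: edge_eq)

lemma vert_in_edge_iff:
  assumes "q < m" "j < m" "t \<in> {1..p}"
  shows "vert q t \<in> edge j \<longleftrightarrow> j = q \<or> (t \<le> s \<and> j = cyc_pred m q)"
proof -
  have "vert q t \<in> vert j ` {1..p} \<longleftrightarrow> j = q"
    using assms vert_inject[of q j t] by auto
  moreover have "vert q t \<in> vert (cyc_succ m j) ` {1..s} \<longleftrightarrow> t \<le> s \<and> q = cyc_succ m j"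
  proof
    assume "vert q t \<in> vert (cyc_succ m j) ` {1..s}"
    then obtain t' where "t' \<in> {1..s}" "vert q t = vert (cyc_succ m j) t'"
      by auto
    then show "t \<le> s \<and> q = cyc_succ m j"
      using vert_inject[OF assms(1) cyc_succ_less[OF m_pos] assms(3), of t'] s_less_p by auto
  qed (use assms in auto)
  moreover have "q = cyc_succ m j \<longleftrightarrow> j = cyc_pred m q"
    using cyc_succ_eq_iff[OF assms(2,1)] by auto
  ultimately show ?thesis
    unfolding edge_eq by auto
qed

lemma edges_at_vert:
  assumes "q < m" "t \<in> {1..p}"
  shows "{j. j < m \<and> vert q t \<in> edge j} = (if t \<le> s then {q, cyc_pred m q} else {q})"
  using assms vert_in_edge_iff cyc_pred_less[OF m_pos] by auto

lemma deg_vert: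
  assumes "q < m" "t \<in> {1..p}"
  shows "scyc_deg k s m (vert q t) = (if t \<le> s then 2 else 1)"
  unfolding scyc_deg_def edges_at_vert[OF assms]
  using cyc_pred_neq[OF m_ge_2 assms(1)] by auto

lemma maxdeg_eq_2: "scyc_maxdeg k s m = 2"
  unfolding scyc_maxdeg_def scyc_n_eq
proof (rule Max_eqI)
  fix d assume "d \<in> scyc_deg k s m ` {0..<n}"
  then obtain v where "v < n" "d = scyc_deg k s m v" by auto
  then show "d \<le> 2" by (metis vert_cases deg_vert nat_le_linear one_le_numeral)
next
  show "2 \<in> scyc_deg k s m ` {0..<n}"
    using deg_vert[of 0 1] vert_less[of 0 1] m_pos s_pos s_less_p by force
qed auto

lemma edge_has_third_vertex:
  assumes "j < m"
  shows "\<exists>w\<in>edge j. w \<noteq> u \<and> w \<noteq> v"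
proof -
  have "cyc_succ m j < m" "cyc_succ m j \<noteq> j"
    using cyc_succ_less[OF m_pos] cyc_succ_neq[OF m_ge_2 assms] by auto
  then have "vert j 1 \<noteq> vert j 2" "vert j 1 \<noteq> vert (cyc_succ m j) 1"
    "vert j 2 \<noteq> vert (cyc_succ m j) 1"
    using vert_inject[OF assms assms, of 1 2] vert_inject[OF assms, of "cyc_succ m j" 1 1]
      vert_inject[OF assms, of "cyc_succ m j" 2 1] s_pos s_less_p by auto
  moreover have "vert j 1 \<in> edge j" "vert j 2 \<in> edge j" "vert (cyc_succ m j) 1 \<in> edge j"
    unfolding edge_eq using s_pos s_less_p by auto
  ultimately show ?thesis by metis
qed

definition lap_H_eqs :: "real \<Rightarrow> (nat \<Rightarrow> real) \<Rightarrow> bool" where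
  "lap_H_eqs lam x \<longleftrightarrow> (\<forall>i<n. lam * x i ^ (k - 1) =
     real (scyc_deg k s m i) * x i ^ (k - 1) - (\<Sum>j\<in>{j. j < m \<and> i \<in> edge j}. \<Prod>v\<in>edge j - {i}. x v))"

lemma scyc_lap_H_eig_iff:
  "scyc_lap_H_eig k s m lam \<longleftrightarrow> (\<exists>x. (\<exists>i<n. x i \<noteq> 0) \<and> lap_H_eqs lam x)"
  by (simp add: scyc_lap_H_eig_def lap_H_eqs_def scyc_n_eq)

lemma lap_H_eig_2: "scyc_lap_H_eig k s m 2"
proof -
  define x :: "nat \<Rightarrow> real" where "x i = (if i = vert 0 1 then 1 else 0)" for i
  have "(\<Prod>v\<in>edge j - {i}. x v) = 0" if j: "j < m" for i j
  proof -
    obtain w where "w \<in> edge j" "w \<noteq> i" "w \<noteq> vert 0 1"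
      using edge_has_third_vertex[OF j] by blast
    then show ?thesis
      using finite_edge by (intro prod_zero) (auto simp: x_def)
  qed
  then have "(\<Sum>j\<in>{j. j < m \<and> i \<in> edge j}. \<Prod>v\<in>edge j - {i}. x v) = 0" for i
    by simp
  moreover have "scyc_deg k s m (vert 0 1) = 2"
    using deg_vert[of 0 1] m_pos s_pos s_less_p by simp
  moreover have "k - 1 \<noteq> 0"
    using s_pos s_less by simp
  ultimately have "lap_H_eqs 2 x"
    by (simp add: lap_H_eqs_def x_def)
  moreover have "x (vert 0 1) \<noteq> 0" "vert 0 1 < n"
    by (simp_all add: x_def vert_less)
  ultimately show ?thesis
    unfolding scyc_lap_H_eig_iff by blast
qed

definition edge_prod :: "(nat \<Rightarrow> real) \<Rightarrow> nat \<Rightarrow> real" where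
  "edge_prod x j = (\<Prod>v\<in>edge j. x v)"

lemma lap_H_eqs_times_x:
  assumes "lap_H_eqs lam x" "i < n"
  shows "lam * x i ^ k = real (scyc_deg k s m i) * x i ^ k
           - (\<Sum>j\<in>{j. j < m \<and> i \<in> edge j}. edge_prod x j)"
proof -
  let ?J = "{j. j < m \<and> i \<in> edge j}"
  have x_pow: "x i * x i ^ (k - 1) = x i ^ k"
    using s_less by (simp add: power_eq_if)
  have "x i * (\<Sum>j\<in>?J. \<Prod>v\<in>edge j - {i}. x v) = (\<Sum>j\<in>?J. edge_prod x j)"
    unfolding sum_distrib_left edge_prod_def
    by (rule sum.cong) (auto simp: prod.remove[OF finite_edge])
  moreover have "x i * (lam * x i ^ (k - 1))
      = x i * (real (scyc_deg k s m i) * x i ^ (k - 1) - (\<Sum>j\<in>?J. \<Prod>v\<in>edge j - {i}. x v))"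
    using assms unfolding lap_H_eqs_def by simp
  ultimately show ?thesis
    using x_pow by (simp add: algebra_simps)
qed

lemma lap_H_eqs_inner:
  assumes "lap_H_eqs lam x" "q < m" "s < t" "t \<le> p"
  shows "(lam - 1) * x (vert q t) ^ k = - edge_prod x q"
proof -
  have "t \<in> {1..p}" using assms s_pos by simp
  then show ?thesis
    using lap_H_eqs_times_x[OF assms(1) vert_less[of q t]] assms
    by (simp add: edges_at_vert deg_vert algebra_simps)
qed

lemma lap_H_eqs_overlap:
  assumes "lap_H_eqs lam x" "q < m" "1 \<le> t" "t \<le> s"
  shows "(lam - 2) * x (vert q t) ^ k = - (edge_prod x q + edge_prod x (cyc_pred m q))"
proof -
  have "t \<in> {1..p}" using assms s_less_p by simp
  then show ?thesis
    using lap_H_eqs_times_x[OF assms(1) vert_less[of q t]] assms cyc_pred_neq[OF m_ge_2 assms(2)]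
    by (simp add: edges_at_vert deg_vert algebra_simps)
qed

lemma edge_prod_blockwise:
  assumes "j < m"
    and inner: "\<And>t. s < t \<Longrightarrow> t \<le> p \<Longrightarrow> x (vert j t) = c"
    and overlap: "\<And>t. 1 \<le> t \<Longrightarrow> t \<le> s \<Longrightarrow> x (vert j t) = d"
    and next_overlap: "\<And>t. 1 \<le> t \<Longrightarrow> t \<le> s \<Longrightarrow> x (vert (cyc_succ m j) t) = d'"
  shows "edge_prod x j = d ^ s * c ^ (p - s) * d' ^ s"
proof -
  let ?j' = "cyc_succ m j"
  have "?j' < m" "?j' \<noteq> j"
    using cyc_succ_less[OF m_pos] cyc_succ_neq[OF m_ge_2 assms(1)] by auto
  then have "vert j t \<noteq> vert ?j' t'" if "t \<in> {1..p}" "t' \<in> {1..s}" for t t'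
    using vert_inject[OF assms(1) \<open>?j' < m\<close> that(1), of t'] that s_less_p by auto
  then have disj: "vert j ` {1..p} \<inter> vert ?j' ` {1..s} = {}"
    by blast
  have inj: "inj_on (vert j) {1..p}" "inj_on (vert ?j') {1..s}"
    using inj_on_vert[OF assms(1)] inj_on_vert[OF \<open>?j' < m\<close>] s_less_p
    by (auto elim: inj_on_subset)
  have split: "{1..p} = {1..s} \<union> {Suc s..p}"
    using s_less_p by auto
  have "edge_prod x j = prod x (vert j ` {1..p}) * prod x (vert ?j' ` {1..s})"
    unfolding edge_prod_def edge_eq using disj by (simp add: prod.union_disjoint)
  also have "\<dots> = (\<Prod>t\<in>{1..p}. x (vert j t)) * (\<Prod>t\<in>{1..s}. x (vert ?j' t))"
    using inj by (simp add: prod.reindex)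
  also have "(\<Prod>t\<in>{1..p}. x (vert j t)) = (\<Prod>t\<in>{1..s}. x (vert j t)) * (\<Prod>t\<in>{Suc s..p}. x (vert j t))"
    unfolding split by (rule prod.union_disjoint) auto
  finally show ?thesis
    using inner overlap next_overlap by simp
qed

lemma lap_H_eqs_imp_zero:
  assumes eqs: "lap_H_eqs lam x" and "1 < lam" "lam \<noteq> 2" "even s \<or> 2 < lam" and "i < n"
  shows "x i = 0"
proof -
  define a where "a q = x (vert q p)" for q
  define b where "b q = x (vert q 1)" for q
  have inner: "x (vert q t) = a q" if "q < m" "s < t" "t \<le> p" for q t
  proof (rule odd_real_power_inject[OF odd_k])
    have "(lam - 1) * x (vert q t) ^ k = (lam - 1) * a q ^ k"
      using lap_H_eqs_inner[OF eqs that] lap_H_eqs_inner[OF eqs that(1) s_less_p order_refl]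
      by (simp add: a_def)
    with \<open>1 < lam\<close> show "x (vert q t) ^ k = a q ^ k" by simp
  qed
  have overlap: "x (vert q t) = b q" if "q < m" "1 \<le> t" "t \<le> s" for q t
  proof (rule odd_real_power_inject[OF odd_k])
    have "(lam - 2) * x (vert q t) ^ k = (lam - 2) * b q ^ k"
      using lap_H_eqs_overlap[OF eqs that] lap_H_eqs_overlap[OF eqs that(1) order_refl s_pos]
      by (simp add: b_def)
    with \<open>lam \<noteq> 2\<close> show "x (vert q t) ^ k = b q ^ k" by simp
  qed
  have block_zero: "a q = 0 \<and> b q = 0" if "q < m" for q
  proof (rule cyclic_system_trivial)
    show "odd (p - s)" "k = (p - s) + 2 * s"
      using odd_k k_eq s_less_p by auto
    show "edge_prod x j = b j ^ s * a j ^ (p - s) * b (cyc_succ m j) ^ s" if "j < m" for j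
      using that inner overlap cyc_succ_less[OF m_pos] by (intro edge_prod_blockwise) auto
    show "(lam - 1) * a j ^ k = - edge_prod x j" if "j < m" for j
      using lap_H_eqs_inner[OF eqs that s_less_p order_refl] by (simp add: a_def)
    show "(lam - 2) * b j ^ k = - (edge_prod x j + edge_prod x (cyc_pred m j))" if "j < m" for j
      using lap_H_eqs_overlap[OF eqs that order_refl s_pos] by (simp add: b_def)
  qed (use assms that in auto)
  obtain q t where "q < m" "t \<in> {1..p}" "i = vert q t"
    using vert_cases[OF \<open>i < n\<close>] .
  then show ?thesis
    using inner overlap block_zero by (cases "t \<le> s") auto
qed

lemma lap_H_eig_le_2:
  assumes "scyc_lap_H_eig k s m lam"
  shows "lam \<le> 2"
  using assms lap_H_eqs_imp_zero[of lam] unfolding scyc_lap_H_eig_iff by force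

lemma lap_H_eigs_gt_1:
  assumes "even s"
  shows "{lam. scyc_lap_H_eig k s m lam \<and> 1 < lam} = {2}"
proof -
  have "lam = 2" if "scyc_lap_H_eig k s m lam" "1 < lam" for lam
    using that assms lap_H_eqs_imp_zero[of lam] unfolding scyc_lap_H_eig_iff by force
  moreover have "(1::real) < 2" by simp
  ultimately show ?thesis
    using lap_H_eig_2 by blast
qed

end

theorem proposition7p1:
  fixes k s m :: nat
  assumes "odd k" and "1 \<le> s" and "2 * s < k"
    and "scyc_n k s m \<ge> 2 * k - s"
  shows "scyc_maxdeg k s m = 2
         \<and> scyc_lap_H_eig k s m 2
         \<and> (\<forall>lam. scyc_lap_H_eig k s m lam \<longrightarrow> lam \<le> 2)
         \<and> (even s \<longrightarrow> {lam. scyc_lap_H_eig k s m lam \<and> lam > 1} = {2})"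
proof -
  have "2 \<le> m"
  proof (rule ccontr)
    assume "\<not> 2 \<le> m"
    then have "m * (k - s) \<le> k - s" by simp
    with assms show False unfolding scyc_n_def by linarith
  qed
  interpret s_cycle k s m "k - s" "m * (k - s)"
    by unfold_locales (use assms \<open>2 \<le> m\<close> in auto)
  show ?thesis
    using maxdeg_eq_2 lap_H_eig_2 lap_H_eig_le_2 lap_H_eigs_gt_1 by blast
qed

end
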